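(* Let $X$ be a subset of $\mathbb{R}^2$, equipped with the metric induced by the $\ell_1$ metric $d(x,y)=|x_1-y_1|+|x_2-y_2|$. Then for every $r>0$, the Vietoris--Rips complex $\mathrm{VR}(X;r)$ is homotopy equivalent to the open $r/2$-neighborhood $N_{r/2}(X)=\{y\in\mathbb{R}^2 : \exists x\in X,\ \|x-y\|_1<r/2\}$ of $X$ in $(\mathbb{R}^2,\ell_1)$. In particular, if $X$ is $\epsilon$-dense in $(\mathbb{R}^2,\ell_1)$ for some $\epsilon>0$, then $\mathrm{VR}(X;r)$ is contractible for every $r>2\epsilon$.
   Context: For a metric space $(X,d_X)$ and $r>0$, the Vietoris--Rips complex $\mathrm{VR}(X;r)$ is the simplicial complex whose vertex set is $X$ and whose simplices are the nonempty finite subsets of $X$ of diameter strictly less than $r$. A subset $K$ of a metric space $Y$ is $\epsilon$-dense if for every $y\in Y$ there exists $k\in K$ with $d_Y(y,k)<\epsilon$. *)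

theory Defs
  imports "HOL-Analysis.Analysis"
begin

text \<open>Abstract simplicial complexes are given as a set K of nonempty finite vertex sets
(closed under nonempty subsets). A point of the geometric realization is a function
\<open>\<alpha> :: 'a \<Rightarrow> real\<close> (barycentric coordinates) with nonnegative values, finite support
belonging to K, and coordinates summing to 1.\<close>

definition supp_coords :: "('a \<Rightarrow> real) \<Rightarrow> 'a set" where
  "supp_coords f = {v. f v \<noteq> 0}"

definition geom_real :: "'a set set \<Rightarrow> ('a \<Rightarrow> real) set" where
  "geom_real K = {f. (\<forall>v. 0 \<le> f v) \<and> finite (supp_coords f) \<and> supp_coords f \<in> K
                     \<and> sum f (supp_coords f) = 1}"

definition closed_simplex :: "'a set set \<Rightarrow> 'a set \<Rightarrow> ('a \<Rightarrow> real) set" where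
  "closed_simplex K \<sigma> = {f \<in> geom_real K. supp_coords f \<subseteq> \<sigma>}"

text \<open>Weak (coherent) topology: a set is open iff its intersection with every closed
simplex is open in that simplex, where each closed simplex carries its Euclidean topology
(the product topology on functions restricted to the finitely many coordinates of \<open>\<sigma>\<close>).\<close>
definition weak_open :: "'a set set \<Rightarrow> ('a \<Rightarrow> real) set \<Rightarrow> bool" where
  "weak_open K U \<longleftrightarrow> U \<subseteq> geom_real K \<and>
     (\<forall>\<sigma>\<in>K. openin (top_of_set (closed_simplex K \<sigma>)) (U \<inter> closed_simplex K \<sigma>))"

lemma istopology_weak_open: "istopology (weak_open K)"
  unfolding istopology_def weak_open_def
proof (intro conjI allI impI)
  fix S T :: "('a \<Rightarrow> real) set"
  assume S: "S \<subseteq> geom_real K \<and> (\<forall>\<sigma>\<in>K. openin (top_of_set (closed_simplex K \<sigma>)) (S \<inter> closed_simplex K \<sigma>))"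
     and T: "T \<subseteq> geom_real K \<and> (\<forall>\<sigma>\<in>K. openin (top_of_set (closed_simplex K \<sigma>)) (T \<inter> closed_simplex K \<sigma>))"
  show "S \<inter> T \<subseteq> geom_real K" using S by blast
  show "\<forall>\<sigma>\<in>K. openin (top_of_set (closed_simplex K \<sigma>)) (S \<inter> T \<inter> closed_simplex K \<sigma>)"
  proof
    fix \<sigma> assume "\<sigma> \<in> K"
    then have "openin (top_of_set (closed_simplex K \<sigma>)) ((S \<inter> closed_simplex K \<sigma>) \<inter> (T \<inter> closed_simplex K \<sigma>))"
      using S T by (metis openin_Int)
    moreover have "(S \<inter> closed_simplex K \<sigma>) \<inter> (T \<inter> closed_simplex K \<sigma>) = S \<inter> T \<inter> closed_simplex K \<sigma>" by blast
    ultimately show "openin (top_of_set (closed_simplex K \<sigma>)) (S \<inter> T \<inter> closed_simplex K \<sigma>)" by simp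
  qed
next
  fix \<K> :: "('a \<Rightarrow> real) set set"
  assume H: "\<forall>S\<in>\<K>. S \<subseteq> geom_real K \<and> (\<forall>\<sigma>\<in>K. openin (top_of_set (closed_simplex K \<sigma>)) (S \<inter> closed_simplex K \<sigma>))"
  show "\<Union>\<K> \<subseteq> geom_real K" using H by blast
  show "\<forall>\<sigma>\<in>K. openin (top_of_set (closed_simplex K \<sigma>)) (\<Union>\<K> \<inter> closed_simplex K \<sigma>)"
  proof
    fix \<sigma> assume "\<sigma> \<in> K"
    then have "openin (top_of_set (closed_simplex K \<sigma>)) (\<Union>S\<in>\<K>. S \<inter> closed_simplex K \<sigma>)"
      using H by (intro openin_Union) blast
    moreover have "(\<Union>S\<in>\<K>. S \<inter> closed_simplex K \<sigma>) = \<Union>\<K> \<inter> closed_simplex K \<sigma>" by blast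
    ultimately show "openin (top_of_set (closed_simplex K \<sigma>)) (\<Union>\<K> \<inter> closed_simplex K \<sigma>)" by simp
  qed
qed

definition realization :: "'a set set \<Rightarrow> ('a \<Rightarrow> real) topology" where
  "realization K = topology (weak_open K)"

definition l1_dist :: "real \<times> real \<Rightarrow> real \<times> real \<Rightarrow> real" where
  "l1_dist x y = \<bar>fst x - fst y\<bar> + \<bar>snd x - snd y\<bar>"

definition VR :: "(real \<times> real) set \<Rightarrow> real \<Rightarrow> (real \<times> real) set set" where
  "VR X r = {\<sigma>. \<sigma> \<noteq> {} \<and> finite \<sigma> \<and> \<sigma> \<subseteq> X \<and> (\<forall>x\<in>\<sigma>. \<forall>y\<in>\<sigma>. l1_dist x y < r)}"

definition l1_nbhd :: "(real \<times> real) set \<Rightarrow> real \<Rightarrow> (real \<times> real) set" where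
  "l1_nbhd X s = {y. \<exists>x\<in>X. l1_dist x y < s}"

definition l1_dense :: "(real \<times> real) set \<Rightarrow> real \<Rightarrow> bool" where
  "l1_dense X \<epsilon> \<longleftrightarrow> (\<forall>y. \<exists>x\<in>X. l1_dist y x < \<epsilon>)"

end

theory Submission
  imports Defs
begin

text \<open>In the coordinates \<open>(x\<^sub>1 + x\<^sub>2, x\<^sub>1 - x\<^sub>2)\<close> the \<open>\<ell>\<^sub>1\<close> plane becomes the
\<open>\<ell>\<^sub>\<infinity>\<close> plane, whose balls are squares. Squares of radius \<open>s\<close> centred at the points of
a set \<open>S\<close> and all containing a point \<open>y\<close> cover the convex hull of \<open>S \<union> {y}\<close>: a point
outside all of them is strictly separated from \<open>S \<union> {y}\<close> by a diagonal linear functional.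
Since a set of diameter \<open>< 2s\<close> has such a centre \<open>y\<close>, the barycentre map
\<open>f : |VR(X;2s)| \<rightarrow> N\<^sub>s(X)\<close> is well defined. A partition of unity on \<open>N\<^sub>s(X)\<close> subordinate to
the balls \<open>B(x,s)\<close>, \<open>x \<in> X\<close>, gives \<open>g : N\<^sub>s(X) \<rightarrow> |VR(X;2s)|\<close>. Straight lines
join \<open>f \<circ> g\<close> to the identity inside \<open>N\<^sub>s(X)\<close>. In \<open>|VR(X;2s)|\<close>, the identity is joined
by straight lines to the map that keeps only the vertices within \<open>s\<close> of the barycentre, and
that map to \<open>g \<circ> f\<close>: at each point the supports involved lie within \<open>s\<close> of a common point,
hence span a simplex.\<close>

lemma l1_dist_sym: "l1_dist x y = l1_dist y x"
  unfolding l1_dist_def by linarith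

lemma l1_dist_triangle: "l1_dist x z \<le> l1_dist x y + l1_dist y z"
  unfolding l1_dist_def by linarith

definition diag_u :: "real \<times> real \<Rightarrow> real" where
  "diag_u z = fst z + snd z"

definition diag_v :: "real \<times> real \<Rightarrow> real" where
  "diag_v z = fst z - snd z"

lemma l1_dist_eq_max_diag:
  "l1_dist x y = max \<bar>diag_u x - diag_u y\<bar> \<bar>diag_v x - diag_v y\<bar>"
  unfolding l1_dist_def diag_u_def diag_v_def by (simp add: max_def abs_if)

lemma inner_diag: "inner (a + b, a - b) z = a * diag_u z + b * diag_v z"
  unfolding diag_u_def diag_v_def by (simp add: inner_prod_def algebra_simps)

lemma diag_eqI: "diag_u x = diag_u y \<Longrightarrow> diag_v x = diag_v y \<Longrightarrow> x = y"
  unfolding diag_u_def diag_v_def by (simp add: prod_eq_iff)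

lemma sgn_mult_gt_neg:
  fixes a b q :: real
  assumes "\<bar>a - b\<bar> < s"
  shows "- s < sgn (b - q) * (a - q)"
  using assms by (auto simp: sgn_if abs_if split: if_splits)

lemma sgn_mult_eq_abs:
  fixes a b q :: real
  assumes "\<bar>a - b\<bar> < s" and "s \<le> \<bar>a - q\<bar>"
  shows "sgn (b - q) * (a - q) = \<bar>a - q\<bar>"
  using assms by (auto simp: sgn_if abs_if split: if_splits)

text \<open>The functional is \<open>sgn (diag_u y - diag_u p) * diag_u + sgn (diag_v y - diag_v p) * diag_v\<close>:
in a coordinate where \<open>x \<in> S\<close> is \<open>s\<close>-far from \<open>p\<close>, \<open>x\<close> lies on the side of \<open>y\<close>, while in
the other coordinate it is less than \<open>s\<close> behind.\<close>

lemma l1_far_point_separated: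
  assumes "S \<noteq> {}" and near: "\<forall>x\<in>S. l1_dist y x < s" and far: "\<forall>x\<in>S. s \<le> l1_dist p x"
  obtains c where "\<forall>z\<in>insert y S. inner c p < inner c z"
proof
  define cu where "cu = sgn (diag_u y - diag_u p)"
  define cv where "cv = sgn (diag_v y - diag_v p)"
  have c_diff: "inner (cu + cv, cu - cv) z - inner (cu + cv, cu - cv) p
      = cu * (diag_u z - diag_u p) + cv * (diag_v z - diag_v p)" for z
    by (simp add: inner_diag algebra_simps)
  have "y \<noteq> p"
    using assms by force
  then have "diag_u y \<noteq> diag_u p \<or> diag_v y \<noteq> diag_v p"
    using diag_eqI by blast
  then have "0 < cu * (diag_u y - diag_u p) + cv * (diag_v y - diag_v p)"
    unfolding cu_def cv_def by (auto simp: sgn_if)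
  moreover have "0 < cu * (diag_u x - diag_u p) + cv * (diag_v x - diag_v p)" if "x \<in> S" for x
  proof -
    have u: "\<bar>diag_u x - diag_u y\<bar> < s" and v: "\<bar>diag_v x - diag_v y\<bar> < s"
      using near that by (auto simp: l1_dist_eq_max_diag abs_minus_commute)
    have "s \<le> \<bar>diag_u x - diag_u p\<bar> \<or> s \<le> \<bar>diag_v x - diag_v p\<bar>"
      using far that by (auto simp: l1_dist_eq_max_diag abs_minus_commute le_max_iff_disj)
    then show ?thesis
      using sgn_mult_gt_neg[OF u, of "diag_u p"] sgn_mult_gt_neg[OF v, of "diag_v p"]
        sgn_mult_eq_abs[OF u, of "diag_u p"] sgn_mult_eq_abs[OF v, of "diag_v p"]
      unfolding cu_def cv_def by auto
  qed
  ultimately show "\<forall>z\<in>insert y S. inner (cu + cv, cu - cv) p < inner (cu + cv, cu - cv) z"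
    using c_diff by (smt (verit) insert_iff)
qed

lemma l1_near_convex_hull_insert:
  assumes "S \<noteq> {}" and "\<forall>x\<in>S. l1_dist y x < s" and "p \<in> convex hull (insert y S)"
  shows "\<exists>x\<in>S. l1_dist p x < s"
proof (rule ccontr)
  assume "\<not> ?thesis"
  then obtain c where "\<forall>z\<in>insert y S. inner c p < inner c z"
    using l1_far_point_separated[OF assms(1,2)] by (meson not_less)
  then have "convex hull (insert y S) \<subseteq> {z. inner c p < inner c z}"
    by (intro hull_minimal) (auto simp: convex_halfspace_gt)
  then show False
    using assms(3) by auto
qed

lemma abs_diff_midrange_less:
  fixes h :: "'a \<Rightarrow> real"
  assumes "finite S" and "x \<in> S" and "\<forall>x\<in>S. \<forall>x'\<in>S. \<bar>h x - h x'\<bar> < 2 * s"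
  shows "\<bar>h x - (Max (h ` S) + Min (h ` S)) / 2\<bar> < s"
proof -
  have "Max (h ` S) \<in> h ` S" "Min (h ` S) \<in> h ` S"
    using assms(1,2) by (auto intro: Max_in Min_in)
  then have "Max (h ` S) - Min (h ` S) < 2 * s"
    using assms(3) by fastforce
  moreover have "Min (h ` S) \<le> h x" "h x \<le> Max (h ` S)"
    using assms(1,2) by auto
  ultimately show ?thesis
    by (simp add: abs_less_iff field_simps)
qed

lemma l1_center_exists:
  assumes "finite S" and diam: "\<forall>x\<in>S. \<forall>x'\<in>S. l1_dist x x' < 2 * s"
  obtains y where "\<forall>x\<in>S. l1_dist y x < s"
proof
  define mu where "mu = (Max (diag_u ` S) + Min (diag_u ` S)) / 2"
  define mv where "mv = (Max (diag_v ` S) + Min (diag_v ` S)) / 2"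
  define y where "y = ((mu + mv) / 2, (mu - mv) / 2)"
  have y: "diag_u y = mu" "diag_v y = mv"
    unfolding y_def diag_u_def diag_v_def by (simp_all add: field_simps)
  have "\<forall>x\<in>S. \<forall>x'\<in>S. \<bar>diag_u x - diag_u x'\<bar> < 2 * s"
    and "\<forall>x\<in>S. \<forall>x'\<in>S. \<bar>diag_v x - diag_v x'\<bar> < 2 * s"
    using diam by (auto simp: l1_dist_eq_max_diag)
  then show "\<forall>x\<in>S. l1_dist y x < s"
    using abs_diff_midrange_less[OF assms(1)]
    unfolding l1_dist_eq_max_diag y mu_def mv_def by (auto simp: abs_minus_commute)
qed

lemma l1_near_convex_hull:
  assumes "finite S" and "S \<noteq> {}" and "\<forall>x\<in>S. \<forall>x'\<in>S. l1_dist x x' < 2 * s"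
    and "p \<in> convex hull S"
  shows "\<exists>x\<in>S. l1_dist p x < s"
proof -
  obtain y where "\<forall>x\<in>S. l1_dist y x < s"
    using l1_center_exists assms(1,3) by blast
  moreover have "p \<in> convex hull (insert y S)"
    using assms(4) hull_mono[of S "insert y S" convex] by blast
  ultimately show ?thesis
    using l1_near_convex_hull_insert assms(2) by blast
qed

lemma openin_realization: "openin (realization K) = weak_open K"
  unfolding realization_def by (simp add: istopology_weak_open)

lemma topspace_realization: "topspace (realization K) = geom_real K"
proof -
  have "weak_open K (geom_real K)"
    unfolding weak_open_def closed_simplex_def by (simp add: Int_absorb1)
  then show ?thesis
    unfolding topspace_def openin_realization weak_open_def by blast
qed

lemma geom_real_nonneg: "\<beta> \<in> geom_real K \<Longrightarrow> 0 \<le> \<beta> v"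
  unfolding geom_real_def by simp

lemma geom_real_finite: "\<beta> \<in> geom_real K \<Longrightarrow> finite (supp_coords \<beta>)"
  unfolding geom_real_def by simp

lemma geom_real_supp_in: "\<beta> \<in> geom_real K \<Longrightarrow> supp_coords \<beta> \<in> K"
  unfolding geom_real_def by simp

lemma geom_real_in_closed_simplex: "\<beta> \<in> geom_real K \<Longrightarrow> \<beta> \<in> closed_simplex K (supp_coords \<beta>)"
  unfolding closed_simplex_def by simp

lemma sum_geom_real_superset:
  assumes "\<beta> \<in> geom_real K" and "finite T" and "supp_coords \<beta> \<subseteq> T"
  shows "sum \<beta> T = 1"
proof -
  have "sum \<beta> T = sum \<beta> (supp_coords \<beta>)"
    by (rule sum.mono_neutral_right[OF assms(2,3)]) (auto simp: supp_coords_def)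
  then show ?thesis
    using assms(1) unfolding geom_real_def by simp
qed

lemma geom_real_memI:
  assumes down: "\<And>\<sigma> \<tau>. \<sigma> \<in> K \<Longrightarrow> \<tau> \<subseteq> \<sigma> \<Longrightarrow> \<tau> \<noteq> {} \<Longrightarrow> \<tau> \<in> K"
    and "\<And>v. 0 \<le> \<beta> v" and "finite T" and "supp_coords \<beta> \<subseteq> T" and "sum \<beta> T = 1" and "T \<in> K"
  shows "\<beta> \<in> geom_real K"
proof -
  have "sum \<beta> T = sum \<beta> (supp_coords \<beta>)"
    by (rule sum.mono_neutral_right[OF assms(3,4)]) (auto simp: supp_coords_def)
  then have "sum \<beta> (supp_coords \<beta>) = 1"
    using assms(5) by simp
  moreover from this have "supp_coords \<beta> \<in> K"
    using down[OF assms(6,4)] by force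
  ultimately show ?thesis
    unfolding geom_real_def using assms(2-4) finite_subset by blast
qed

lemma geom_real_segment:
  assumes down: "\<And>\<sigma> \<tau>. \<sigma> \<in> K \<Longrightarrow> \<tau> \<subseteq> \<sigma> \<Longrightarrow> \<tau> \<noteq> {} \<Longrightarrow> \<tau> \<in> K"
    and \<alpha>: "\<alpha> \<in> geom_real K" and \<gamma>: "\<gamma> \<in> geom_real K"
    and T: "supp_coords \<alpha> \<union> supp_coords \<gamma> \<in> K" and t: "t \<in> {0..1}"
  shows "(\<lambda>v. (1 - t) * \<alpha> v + t * \<gamma> v) \<in> geom_real K"
proof (rule geom_real_memI[where K = K])
  show "\<And>\<sigma> \<tau>. \<sigma> \<in> K \<Longrightarrow> \<tau> \<subseteq> \<sigma> \<Longrightarrow> \<tau> \<noteq> {} \<Longrightarrow> \<tau> \<in> K"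
    by (rule down)
  show "supp_coords \<alpha> \<union> supp_coords \<gamma> \<in> K"
    by (rule T)
  show "0 \<le> (1 - t) * \<alpha> v + t * \<gamma> v" for v
    using t geom_real_nonneg[OF \<alpha>] geom_real_nonneg[OF \<gamma>] by simp
  show fin: "finite (supp_coords \<alpha> \<union> supp_coords \<gamma>)"
    using geom_real_finite[OF \<alpha>] geom_real_finite[OF \<gamma>] by simp
  show "supp_coords (\<lambda>v. (1 - t) * \<alpha> v + t * \<gamma> v) \<subseteq> supp_coords \<alpha> \<union> supp_coords \<gamma>"
    unfolding supp_coords_def by auto
  show "(\<Sum>v\<in>supp_coords \<alpha> \<union> supp_coords \<gamma>. (1 - t) * \<alpha> v + t * \<gamma> v) = 1"
    using sum_geom_real_superset[OF \<alpha> fin] sum_geom_real_superset[OF \<gamma> fin]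
    by (simp add: sum.distrib sum_distrib_left[symmetric])
qed

lemma closed_supp_coords_subset: "closed {\<beta> :: 'a \<Rightarrow> real. supp_coords \<beta> \<subseteq> \<rho>}"
proof -
  have "{\<beta> :: 'a \<Rightarrow> real. supp_coords \<beta> \<subseteq> \<rho>} = (\<Inter>v\<in>-\<rho>. {\<beta>. \<beta> v = 0})"
    unfolding supp_coords_def by auto
  moreover have "closed {\<beta> :: 'a \<Rightarrow> real. \<beta> v = 0}" for v
    by (rule closed_Collect_eq) (auto intro: continuous_on_product_coordinates)
  ultimately show ?thesis by (metis closed_INT)
qed

lemma openin_realization_finite_support:
  assumes U: "weak_open K U" and "finite F"
  shows "openin (top_of_set {\<beta> \<in> geom_real K. supp_coords \<beta> \<subseteq> F})
           (U \<inter> {\<beta> \<in> geom_real K. supp_coords \<beta> \<subseteq> F})"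
proof -
  define L where "L = {\<beta> \<in> geom_real K. supp_coords \<beta> \<subseteq> F}"
  have L_minus_U: "L - U = (\<Union>\<rho>\<in>K \<inter> Pow F. closed_simplex K \<rho> - U)"
  proof
    show "L - U \<subseteq> (\<Union>\<rho>\<in>K \<inter> Pow F. closed_simplex K \<rho> - U)"
      unfolding L_def using geom_real_supp_in geom_real_in_closed_simplex by blast
    show "(\<Union>\<rho>\<in>K \<inter> Pow F. closed_simplex K \<rho> - U) \<subseteq> L - U"
      unfolding L_def closed_simplex_def by blast
  qed
  have "closedin (top_of_set L) (closed_simplex K \<rho> - U)" if "\<rho> \<in> K \<inter> Pow F" for \<rho>
  proof -
    have "openin (top_of_set (closed_simplex K \<rho>)) (U \<inter> closed_simplex K \<rho>)"
      using U that unfolding weak_open_def by blast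
    then have "closedin (top_of_set (closed_simplex K \<rho>)) (closed_simplex K \<rho> - (U \<inter> closed_simplex K \<rho>))"
      by (intro closedin_diff) auto
    moreover have "closed_simplex K \<rho> - (U \<inter> closed_simplex K \<rho>) = closed_simplex K \<rho> - U"
      by blast
    ultimately have "closedin (top_of_set (closed_simplex K \<rho>)) (closed_simplex K \<rho> - U)"
      by simp
    moreover have "closed_simplex K \<rho> = L \<inter> {\<beta>. supp_coords \<beta> \<subseteq> \<rho>}"
      using that unfolding L_def closed_simplex_def by blast
    then have "closedin (top_of_set L) (closed_simplex K \<rho>)"
      by (simp add: closedin_closed_Int closed_supp_coords_subset)
    ultimately show ?thesis
      using closedin_trans by blast
  qed
  then have "closedin (top_of_set L) (L - U)"
    unfolding L_minus_U using assms(2) by (intro closedin_Union) auto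
  then show ?thesis
    unfolding L_def[symmetric] by (simp add: closedin_def Diff_Diff_Int Int_commute)
qed

lemma continuous_map_into_realization:
  assumes cont: "continuous_map Y euclidean h"
    and mem: "\<And>y. y \<in> topspace Y \<Longrightarrow> h y \<in> geom_real K"
    and locfin: "\<And>y. y \<in> topspace Y \<Longrightarrow>
       \<exists>T F. openin Y T \<and> y \<in> T \<and> finite F \<and> (\<forall>y'\<in>T. supp_coords (h y') \<subseteq> F)"
  shows "continuous_map Y (realization K) h"
  unfolding continuous_map
proof (intro conjI allI impI)
  show "h ` topspace Y \<subseteq> topspace (realization K)"
    using mem by (auto simp: topspace_realization)
  fix U assume "openin (realization K) U"
  then have U: "weak_open K U" by (simp add: openin_realization)
  show "openin Y {y \<in> topspace Y. h y \<in> U}"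
  proof (subst openin_subopen, intro ballI)
    fix y0 assume y0: "y0 \<in> {y \<in> topspace Y. h y \<in> U}"
    then have y0_in: "y0 \<in> topspace Y"
      by simp
    obtain T F where T: "openin Y T" "y0 \<in> T" "finite F" "\<forall>y\<in>T. supp_coords (h y) \<subseteq> F"
      using locfin[OF y0_in] by blast
    define L where "L = {\<beta> \<in> geom_real K. supp_coords \<beta> \<subseteq> F}"
    have "h ` topspace (subtopology Y T) \<subseteq> L"
      using T(4) mem unfolding L_def by auto
    then have cont_T: "continuous_map (subtopology Y T) (top_of_set L) h"
      by (simp add: continuous_map_in_subtopology continuous_map_from_subtopology cont
          image_subset_iff_funcset)
    have open_UL: "openin (top_of_set L) (U \<inter> L)"
      using openin_realization_finite_support[OF U T(3)] unfolding L_def .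
    have topspace_T: "topspace (subtopology Y T) = T"
      using T(1) by (simp add: openin_subset inf_absorb2)
    have "openin (subtopology Y T) {y \<in> T. h y \<in> U \<inter> L}"
      using openin_continuous_map_preimage[OF cont_T open_UL] unfolding topspace_T .
    then have "openin Y {y \<in> T. h y \<in> U \<inter> L}"
      using T(1) by (rule openin_trans_full)
    moreover have "y0 \<in> {y \<in> T. h y \<in> U \<inter> L}"
      using y0 T mem unfolding L_def by auto
    moreover have "{y \<in> T. h y \<in> U \<inter> L} \<subseteq> {y \<in> topspace Y. h y \<in> U}"
      using T(1) openin_subset by blast
    ultimately show "\<exists>T'. openin Y T' \<and> y0 \<in> T' \<and> T' \<subseteq> {y \<in> topspace Y. h y \<in> U}"
      by (intro exI[of _ "{y \<in> T. h y \<in> U \<inter> L}"]) simp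
  qed
qed

lemma weak_open_tube:
  assumes C: "compactin Z C"
    and W: "\<And>\<sigma>. \<sigma> \<in> K \<Longrightarrow>
      openin (prod_topology Z (top_of_set (closed_simplex K \<sigma>))) (W \<inter> (topspace Z \<times> closed_simplex K \<sigma>))"
  shows "weak_open K {\<beta> \<in> geom_real K. C \<times> {\<beta>} \<subseteq> W}"
  unfolding weak_open_def
proof (intro conjI ballI)
  define \<Omega> where "\<Omega> = {\<beta> \<in> geom_real K. C \<times> {\<beta>} \<subseteq> W}"
  fix \<sigma> assume \<sigma>: "\<sigma> \<in> K"
  show "openin (top_of_set (closed_simplex K \<sigma>)) (\<Omega> \<inter> closed_simplex K \<sigma>)"
  proof (subst openin_subopen, intro ballI)
    fix \<beta> assume \<beta>: "\<beta> \<in> \<Omega> \<inter> closed_simplex K \<sigma>"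
    have "C \<subseteq> topspace Z"
      using C compactin_subset_topspace by blast
    then have "C \<times> {\<beta>} \<subseteq> W \<inter> (topspace Z \<times> closed_simplex K \<sigma>)"
      using \<beta> unfolding \<Omega>_def by auto
    then obtain U V where UV: "openin (top_of_set (closed_simplex K \<sigma>)) V" "\<beta> \<in> V" "C \<subseteq> U"
      "U \<times> V \<subseteq> W \<inter> (topspace Z \<times> closed_simplex K \<sigma>)"
      using tube_lemma_left[OF W[OF \<sigma>] C, of \<beta>] \<beta> by auto
    moreover have "V \<subseteq> \<Omega> \<inter> closed_simplex K \<sigma>"
      using UV openin_subset[OF UV(1)] unfolding \<Omega>_def closed_simplex_def by auto
    ultimately show "\<exists>T. openin (top_of_set (closed_simplex K \<sigma>)) T \<and> \<beta> \<in> T \<and> T \<subseteq> \<Omega> \<inter> closed_simplex K \<sigma>"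
      by blast
  qed
qed (simp add: subset_eq)

text \<open>Since \<open>[0,1]\<close> is locally compact, the tube lemma shows that \<open>[0,1] \<times> |K|\<close> still
carries the topology coherent with the pieces \<open>[0,1] \<times> \<sigma>\<close>.\<close>

lemma openin_prod_realization:
  assumes W: "W \<subseteq> {0..1} \<times> geom_real K"
    and W_simplex: "\<And>\<sigma>. \<sigma> \<in> K \<Longrightarrow> openin (prod_topology (top_of_set {0..1::real})
      (top_of_set (closed_simplex K \<sigma>))) (W \<inter> ({0..1} \<times> closed_simplex K \<sigma>))"
  shows "openin (prod_topology (top_of_set {0..1::real}) (realization K)) W"
proof (subst openin_subopen, intro ballI)
  fix z assume "z \<in> W"
  then obtain t0 \<beta>0 where z: "z = (t0, \<beta>0)" "t0 \<in> {0..1}" "\<beta>0 \<in> geom_real K"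
    using W by auto
  have \<sigma>0: "supp_coords \<beta>0 \<in> K" "\<beta>0 \<in> closed_simplex K (supp_coords \<beta>0)"
    using z geom_real_supp_in geom_real_in_closed_simplex by auto
  have "(t0, \<beta>0) \<in> W \<inter> ({0..1} \<times> closed_simplex K (supp_coords \<beta>0))"
    using z \<sigma>0(2) \<open>z \<in> W\<close> by simp
  then have "\<exists>U V. openin (top_of_set {0..1}) U \<and> openin (top_of_set (closed_simplex K (supp_coords \<beta>0))) V
      \<and> t0 \<in> U \<and> \<beta>0 \<in> V \<and> U \<times> V \<subseteq> W \<inter> ({0..1} \<times> closed_simplex K (supp_coords \<beta>0))"
    using W_simplex[OF \<sigma>0(1)] unfolding openin_prod_topology_alt by simp
  then obtain U1 V1 where UV1: "openin (top_of_set {0..1}) U1" "t0 \<in> U1" "\<beta>0 \<in> V1"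
    "U1 \<times> V1 \<subseteq> W \<inter> ({0..1} \<times> closed_simplex K (supp_coords \<beta>0))"
    by blast
  then obtain G where G: "open G" "U1 = {0..1} \<inter> G"
    unfolding openin_open by blast
  then obtain \<delta> where \<delta>: "\<delta> > 0" "ball t0 \<delta> \<subseteq> G"
    using UV1(2) openE by blast
  define C where "C = cball t0 (\<delta> / 2) \<inter> {0..1::real}"
  define T where "T = ({0..1} \<inter> ball t0 (\<delta> / 2)) \<times> {\<beta> \<in> geom_real K. C \<times> {\<beta>} \<subseteq> W}"
  have "compactin (top_of_set {0..1}) C"
    unfolding C_def by (simp add: compactin_subtopology compact_Int_closed)
  then have "weak_open K {\<beta> \<in> geom_real K. C \<times> {\<beta>} \<subseteq> W}"
    using weak_open_tube[of "top_of_set {0..1}" C K W] W_simplex by simp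
  then have "openin (prod_topology (top_of_set {0..1::real}) (realization K)) T"
    unfolding T_def openin_prod_Times_iff by (simp add: openin_realization openin_open_Int)
  moreover have "C \<subseteq> U1"
    unfolding C_def G(2) using \<delta> by (auto simp: subset_eq dist_commute)
  then have "C \<times> {\<beta>0} \<subseteq> W"
    using UV1(3,4) by blast
  then have "z \<in> T"
    using z \<delta>(1) unfolding T_def by auto
  moreover have "T \<subseteq> W"
    unfolding T_def C_def by auto
  ultimately show "\<exists>T. openin (prod_topology (top_of_set {0..1::real}) (realization K)) T \<and> z \<in> T \<and> T \<subseteq> W"
    by blast
qed

lemma continuous_map_prod_from_realization:
  assumes cont: "\<And>\<sigma>. \<sigma> \<in> K \<Longrightarrow>
      continuous_map (prod_topology (top_of_set {0..1::real}) (top_of_set (closed_simplex K \<sigma>))) Y h"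
  shows "continuous_map (prod_topology (top_of_set {0..1::real}) (realization K)) Y h"
  unfolding continuous_map
proof (intro conjI allI impI)
  have topspace_prod: "topspace (prod_topology (top_of_set {0..1::real}) (realization K)) = {0..1} \<times> geom_real K"
    by (simp add: topspace_realization)
  show "h ` topspace (prod_topology (top_of_set {0..1::real}) (realization K)) \<subseteq> topspace Y"
  proof clarify
    fix t \<beta> assume "(t, \<beta>) \<in> topspace (prod_topology (top_of_set {0..1::real}) (realization K))"
    then have "t \<in> {0..1}" "\<beta> \<in> geom_real K"
      by (auto simp: topspace_realization)
    then show "h (t, \<beta>) \<in> topspace Y"
      using continuous_map_image_subset_topspace[OF cont[OF geom_real_supp_in]]
        geom_real_in_closed_simplex by fastforce
  qed
  fix V assume V: "openin Y V"
  define W where "W = {z \<in> {0..1} \<times> geom_real K. h z \<in> V}"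
  have "openin (prod_topology (top_of_set {0..1::real}) (realization K)) W"
  proof (rule openin_prod_realization)
    fix \<sigma> assume "\<sigma> \<in> K"
    have "W \<inter> ({0..1} \<times> closed_simplex K \<sigma>) = {z \<in> {0..1} \<times> closed_simplex K \<sigma>. h z \<in> V}"
      unfolding W_def closed_simplex_def by auto
    then show "openin (prod_topology (top_of_set {0..1::real}) (top_of_set (closed_simplex K \<sigma>)))
        (W \<inter> ({0..1} \<times> closed_simplex K \<sigma>))"
      using openin_continuous_map_preimage[OF cont[OF \<open>\<sigma> \<in> K\<close>] V] by simp
  qed (auto simp: W_def)
  then show "openin (prod_topology (top_of_set {0..1::real}) (realization K))
      {x \<in> topspace (prod_topology (top_of_set {0..1::real}) (realization K)). h x \<in> V}"
    unfolding topspace_prod W_def by simp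
qed

lemma continuous_map_from_realization:
  assumes "\<And>\<sigma>. \<sigma> \<in> K \<Longrightarrow> continuous_map (top_of_set (closed_simplex K \<sigma>)) Y f"
  shows "continuous_map (realization K) Y f"
proof -
  have "continuous_map (prod_topology (top_of_set {0..1::real}) (realization K)) Y (f \<circ> snd)"
    using assms by (intro continuous_map_prod_from_realization continuous_map_compose[OF continuous_map_snd])
  then have "continuous_map (realization K) Y ((f \<circ> snd) \<circ> (\<lambda>\<beta>. (0::real, \<beta>)))"
    by (rule continuous_map_compose[rotated]) (auto intro: continuous_map_pairedI)
  then show ?thesis
    by (simp add: o_def)
qed

lemma homotopic_linear_in_realization:
  assumes down: "\<And>\<sigma> \<tau>. \<sigma> \<in> K \<Longrightarrow> \<tau> \<subseteq> \<sigma> \<Longrightarrow> \<tau> \<noteq> {} \<Longrightarrow> \<tau> \<in> K"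
    and maps: "\<And>\<beta>. \<beta> \<in> geom_real K \<Longrightarrow>
      f \<beta> \<in> geom_real K \<and> g \<beta> \<in> geom_real K \<and> supp_coords (f \<beta>) \<union> supp_coords (g \<beta>) \<in> K"
    and cont: "\<And>\<sigma>. \<sigma> \<in> K \<Longrightarrow>
      continuous_on (closed_simplex K \<sigma>) f \<and> continuous_on (closed_simplex K \<sigma>) g"
    and locfin: "\<And>\<sigma> \<beta>. \<sigma> \<in> K \<Longrightarrow> \<beta> \<in> closed_simplex K \<sigma> \<Longrightarrow>
      \<exists>T F. openin (top_of_set (closed_simplex K \<sigma>)) T \<and> \<beta> \<in> T \<and> finite F \<and>
        (\<forall>\<beta>'\<in>T. supp_coords (f \<beta>') \<union> supp_coords (g \<beta>') \<subseteq> F)"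
  shows "homotopic_with (\<lambda>_. True) (realization K) (realization K) f g"
proof -
  define H where "H z = (\<lambda>v. (1 - fst z) * f (snd z) v + fst z * g (snd z) v)"
    for z :: "real \<times> ('a \<Rightarrow> real)"
  have supp_H: "supp_coords (H (t, \<beta>)) \<subseteq> supp_coords (f \<beta>) \<union> supp_coords (g \<beta>)" for t \<beta>
    unfolding H_def supp_coords_def by auto
  have H_mem: "H (t, \<beta>) \<in> geom_real K" if "t \<in> {0..1}" "\<beta> \<in> geom_real K" for t \<beta>
  proof -
    have "f \<beta> \<in> geom_real K" "g \<beta> \<in> geom_real K" "supp_coords (f \<beta>) \<union> supp_coords (g \<beta>) \<in> K"
      using maps[OF that(2)] by auto
    with down show ?thesis
      unfolding H_def fst_conv snd_conv using that(1) by (rule geom_real_segment)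
  qed
  have "continuous_map (prod_topology (top_of_set {0..1}) (realization K)) (realization K) H"
  proof (rule continuous_map_prod_from_realization)
    fix \<sigma> assume \<sigma>: "\<sigma> \<in> K"
    let ?D = "{0..1::real} \<times> closed_simplex K \<sigma>"
    have "continuous_map (top_of_set ?D) (realization K) H"
    proof (rule continuous_map_into_realization)
      have "continuous_on ?D H"
        unfolding H_def
      proof (intro continuous_on_coordinatewise_then_product)
        fix v
        have f: "continuous_on (closed_simplex K \<sigma>) (\<lambda>\<beta>. f \<beta> v)"
          and g: "continuous_on (closed_simplex K \<sigma>) (\<lambda>\<beta>. g \<beta> v)"
          using cont[OF \<sigma>] by (auto intro: continuous_on_product_then_coordinatewise)
        have "continuous_on ?D (\<lambda>z. f (snd z) v)"
          by (rule continuous_on_compose2[OF f continuous_on_snd]) auto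
        moreover have "continuous_on ?D (\<lambda>z. g (snd z) v)"
          by (rule continuous_on_compose2[OF g continuous_on_snd]) auto
        ultimately show "continuous_on ?D (\<lambda>z. (1 - fst z) * f (snd z) v + fst z * g (snd z) v)"
          by (intro continuous_intros)
      qed
      then show "continuous_map (top_of_set ?D) euclidean H"
        by simp
      show "H z \<in> geom_real K" if "z \<in> topspace (top_of_set ?D)" for z
        using that H_mem unfolding closed_simplex_def by auto
      fix z assume "z \<in> topspace (top_of_set ?D)"
      then obtain t \<beta> where z: "z = (t, \<beta>)" "t \<in> {0..1}" "\<beta> \<in> closed_simplex K \<sigma>"
        by auto
      then obtain T F where T: "openin (top_of_set (closed_simplex K \<sigma>)) T" "\<beta> \<in> T" "finite F"
        "\<forall>\<beta>'\<in>T. supp_coords (f \<beta>') \<union> supp_coords (g \<beta>') \<subseteq> F"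
        using locfin[OF \<sigma>] by blast
      have "openin (top_of_set ?D) ({0..1} \<times> T)"
        using T(1) by (simp add: openin_Times)
      moreover have "\<forall>z'\<in>{0..1} \<times> T. supp_coords (H z') \<subseteq> F"
        using T(4) supp_H by fastforce
      ultimately show "\<exists>T F. openin (top_of_set ?D) T \<and> z \<in> T \<and> finite F \<and> (\<forall>z'\<in>T. supp_coords (H z') \<subseteq> F)"
        using z T(2,3) by blast
    qed
    then show "continuous_map (prod_topology (top_of_set {0..1}) (top_of_set (closed_simplex K \<sigma>))) (realization K) H"
      by simp
  qed
  moreover have "H (0, \<beta>) = f \<beta>" "H (1, \<beta>) = g \<beta>" for \<beta>
    unfolding H_def by auto
  ultimately show ?thesis
    unfolding homotopic_with_def by (intro exI[of _ H]) auto
qed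

lemma partition_of_unity_refining:
  fixes N :: "'a::{metric_space, second_countable_topology} set" and B :: "'i \<Rightarrow> 'a set"
  assumes cover: "N \<subseteq> (\<Union>i\<in>I. B i)" and open_B: "\<And>i. i \<in> I \<Longrightarrow> open (B i)"
  obtains \<C> :: "'a set set" and F :: "'a set \<Rightarrow> 'a \<Rightarrow> real" and c :: "'a set \<Rightarrow> 'i" where
    "\<And>U. U \<in> \<C> \<Longrightarrow> continuous_on N (F U) \<and> (\<forall>y\<in>N. 0 \<le> F U y)"
    "\<And>y U. U \<in> \<C> \<Longrightarrow> y \<in> N \<Longrightarrow> F U y \<noteq> 0 \<Longrightarrow> c U \<in> I \<and> y \<in> B (c U)"
    "\<And>y. y \<in> N \<Longrightarrow> supp_sum (\<lambda>U. F U y) \<C> = 1"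
    "\<And>y. y \<in> N \<Longrightarrow> \<exists>V. open V \<and> y \<in> V \<and> finite {U \<in> \<C>. \<exists>y\<in>V. F U y \<noteq> 0}"
proof -
  obtain \<C> where \<C>: "N \<subseteq> \<Union>\<C>" "\<And>U. U \<in> \<C> \<Longrightarrow> open U \<and> (\<exists>T. T \<in> B ` I \<and> U \<subseteq> T)"
    "\<And>y. y \<in> N \<Longrightarrow> \<exists>V. open V \<and> y \<in> V \<and> finite {U. U \<in> \<C> \<and> U \<inter> V \<noteq> {}}"
    using paracompact[of N "B ` I"] cover open_B by blast
  obtain F :: "'a set \<Rightarrow> 'a \<Rightarrow> real" where
    F_cont: "\<And>U. U \<in> \<C> \<Longrightarrow> continuous_on N (F U) \<and> (\<forall>y\<in>N. 0 \<le> F U y)"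
    and F_supp: "\<And>y U. U \<in> \<C> \<Longrightarrow> y \<in> N \<Longrightarrow> y \<notin> U \<Longrightarrow> F U y = 0"
    and F_sum: "\<And>y. y \<in> N \<Longrightarrow> supp_sum (\<lambda>U. F U y) \<C> = 1"
    and F_locfin: "\<And>y. y \<in> N \<Longrightarrow> \<exists>V. open V \<and> y \<in> V \<and> finite {U \<in> \<C>. \<exists>y\<in>V. F U y \<noteq> 0}"
  proof (rule subordinate_partition_of_unity[OF \<C>(1)])
    show "\<And>U. U \<in> \<C> \<Longrightarrow> open U"
      using \<C>(2) by blast
    show "\<And>y. y \<in> N \<Longrightarrow> \<exists>V. open V \<and> y \<in> V \<and> finite {U \<in> \<C>. U \<inter> V \<noteq> {}}"
      using \<C>(3) by simp
  qed blast+
  have "\<forall>U\<in>\<C>. \<exists>i. i \<in> I \<and> U \<subseteq> B i"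
    using \<C>(2) by blast
  then obtain c where c: "\<And>U. U \<in> \<C> \<Longrightarrow> c U \<in> I \<and> U \<subseteq> B (c U)"
    by (metis bchoice)
  have supp: "c U \<in> I \<and> y \<in> B (c U)" if "U \<in> \<C>" "y \<in> N" "F U y \<noteq> 0" for y U
    using c[OF that(1)] F_supp[OF that(1,2)] that(3) by blast
  show thesis
    using F_cont supp F_sum F_locfin by (rule that)
qed

lemma indexed_partition_of_unity:
  fixes N :: "'a::{metric_space, second_countable_topology} set" and B :: "'i \<Rightarrow> 'a set"
  assumes "open N" and cover: "N \<subseteq> (\<Union>i\<in>I. B i)" and open_B: "\<And>i. i \<in> I \<Longrightarrow> open (B i)"
  obtains \<psi> :: "'i \<Rightarrow> 'a \<Rightarrow> real" where
    "\<And>i. continuous_on N (\<psi> i)"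
    "\<And>i y. y \<in> N \<Longrightarrow> 0 \<le> \<psi> i y"
    "\<And>i y. y \<in> N \<Longrightarrow> \<psi> i y \<noteq> 0 \<Longrightarrow> i \<in> I \<and> y \<in> B i"
    "\<And>y. y \<in> N \<Longrightarrow> \<exists>V. open V \<and> y \<in> V \<and> finite {i. \<exists>y'\<in>V \<inter> N. \<psi> i y' \<noteq> 0}"
    "\<And>y. y \<in> N \<Longrightarrow> sum (\<lambda>i. \<psi> i y) {i. \<psi> i y \<noteq> 0} = 1"
proof (rule partition_of_unity_refining[OF cover open_B])
  fix \<C> :: "'a set set" and F :: "'a set \<Rightarrow> 'a \<Rightarrow> real" and c :: "'a set \<Rightarrow> 'i"
  assume F_cont: "\<And>U. U \<in> \<C> \<Longrightarrow> continuous_on N (F U) \<and> (\<forall>y\<in>N. 0 \<le> F U y)"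
    and F_supp: "\<And>y U. U \<in> \<C> \<Longrightarrow> y \<in> N \<Longrightarrow> F U y \<noteq> 0 \<Longrightarrow> c U \<in> I \<and> y \<in> B (c U)"
    and F_sum: "\<And>y. y \<in> N \<Longrightarrow> supp_sum (\<lambda>U. F U y) \<C> = 1"
    and F_locfin: "\<And>y. y \<in> N \<Longrightarrow> \<exists>V. open V \<and> y \<in> V \<and> finite {U \<in> \<C>. \<exists>y\<in>V. F U y \<noteq> 0}"
  define active where "active V = {U \<in> \<C>. \<exists>y\<in>V. F U y \<noteq> 0}" for V
  have "\<forall>y\<in>N. \<exists>V. open V \<and> y \<in> V \<and> finite (active V)"
    using F_locfin unfolding active_def by blast
  then obtain nb where nb: "\<And>y. y \<in> N \<Longrightarrow> open (nb y) \<and> y \<in> nb y \<and> finite (active (nb y))"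
    by (metis bchoice)
  define \<psi> where "\<psi> i y = (\<Sum>U | U \<in> \<C> \<and> F U y \<noteq> 0 \<and> c U = i. F U y)" for i y
  have \<psi>_local: "\<psi> i y = (\<Sum>U | U \<in> active (nb y0) \<and> c U = i. F U y)"
    if "y0 \<in> N" "y \<in> nb y0" for i y y0
    unfolding \<psi>_def active_def
    by (rule sum.mono_neutral_left) (use nb[OF that(1)] that(2) in \<open>auto simp: active_def elim: rev_finite_subset\<close>)
  have \<psi>_nonzero: "\<exists>U\<in>\<C>. F U y \<noteq> 0 \<and> c U = i" if "\<psi> i y \<noteq> 0" for i y
    using that unfolding \<psi>_def by (metis (mono_tags, lifting) Collect_empty_eq sum.empty)
  have "continuous_on N (\<psi> i)" for i
  proof -
    have "continuous_on (N \<inter> nb y0) (\<psi> i)" if "y0 \<in> N" for y0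
    proof -
      have "continuous_on (N \<inter> nb y0) (\<lambda>y. \<Sum>U | U \<in> active (nb y0) \<and> c U = i. F U y)"
        using F_cont unfolding active_def by (intro continuous_on_sum) (auto intro: continuous_on_subset)
      then show ?thesis
        by (rule continuous_on_eq) (use \<psi>_local[OF that] in auto)
    qed
    then have "continuous_on (\<Union>y0\<in>N. N \<inter> nb y0) (\<psi> i)"
      using nb \<open>open N\<close> by (intro continuous_on_open_UN) auto
    moreover have "(\<Union>y0\<in>N. N \<inter> nb y0) = N"
      using nb by blast
    ultimately show ?thesis
      by simp
  qed
  moreover have "0 \<le> \<psi> i y" if "y \<in> N" for i y
    unfolding \<psi>_def using F_cont that by (auto intro: sum_nonneg)
  moreover have "i \<in> I \<and> y \<in> B i" if y: "y \<in> N" and nz: "\<psi> i y \<noteq> 0" for i y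
  proof -
    obtain U where "U \<in> \<C>" "F U y \<noteq> 0" "c U = i"
      using \<psi>_nonzero[OF nz] by blast
    then show ?thesis
      using F_supp[OF _ y] by blast
  qed
  moreover have "\<exists>V. open V \<and> y \<in> V \<and> finite {i. \<exists>y'\<in>V \<inter> N. \<psi> i y' \<noteq> 0}" if "y \<in> N" for y
  proof -
    have "{i. \<exists>y'\<in>nb y \<inter> N. \<psi> i y' \<noteq> 0} \<subseteq> c ` active (nb y)"
      unfolding active_def using \<psi>_nonzero by blast
    moreover have "finite (c ` active (nb y))"
      using nb[OF that] by blast
    ultimately have "finite {i. \<exists>y'\<in>nb y \<inter> N. \<psi> i y' \<noteq> 0}"
      by (rule finite_subset)
    then show ?thesis
      using nb[OF that] by blast
  qed
  moreover have "sum (\<lambda>i. \<psi> i y) {i. \<psi> i y \<noteq> 0} = 1" if y: "y \<in> N" for y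
  proof -
    define G where "G = {U \<in> \<C>. F U y \<noteq> 0}"
    have "G \<subseteq> active (nb y)"
      using nb[OF y] unfolding G_def active_def by blast
    then have "finite G"
      using nb[OF y] by (blast intro: finite_subset)
    have "sum (\<lambda>i. \<psi> i y) {i. \<psi> i y \<noteq> 0} = sum (\<lambda>i. \<psi> i y) (c ` G)"
      using \<open>finite G\<close> \<psi>_nonzero unfolding G_def by (intro sum.mono_neutral_left) blast+
    also have "\<dots> = (\<Sum>i\<in>c ` G. sum (\<lambda>U. F U y) {U \<in> G. c U = i})"
      unfolding \<psi>_def G_def by (intro sum.cong refl arg_cong[where f = "sum (\<lambda>U. F U y)"]) blast
    also have "\<dots> = sum (\<lambda>U. F U y) G"
      using sum.image_gen[OF \<open>finite G\<close>, of "\<lambda>U. F U y" c] by simp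
    also have "\<dots> = 1"
      using F_sum[OF y] unfolding G_def supp_sum_def support_on_def by simp
    finally show ?thesis .
  qed
  ultimately show thesis
    by (rule that)
qed

lemma VR_downward_closed: "\<sigma> \<in> VR X r \<Longrightarrow> \<tau> \<subseteq> \<sigma> \<Longrightarrow> \<tau> \<noteq> {} \<Longrightarrow> \<tau> \<in> VR X r"
  unfolding VR_def by (auto intro: finite_subset)

lemma geom_real_VR_memI:
  assumes "\<And>v. 0 \<le> \<beta> v" and "finite T" and "supp_coords \<beta> \<subseteq> T" and "sum \<beta> T = 1"
    and "T \<in> VR X r"
  shows "\<beta> \<in> geom_real (VR X r)"
  using VR_downward_closed assms by (rule geom_real_memI)

lemma VR_finite: "\<sigma> \<in> VR X r \<Longrightarrow> finite \<sigma>"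
  unfolding VR_def by simp

lemma VR_if_l1_near:
  assumes "finite T" "T \<noteq> {}" "T \<subseteq> X" "\<forall>x\<in>T. l1_dist x q < s"
  shows "T \<in> VR X (2 * s)"
proof -
  have "l1_dist x y < 2 * s" if "x \<in> T" "y \<in> T" for x y
  proof -
    have "l1_dist x q < s" "l1_dist q y < s"
      using assms(4) that l1_dist_sym[of q y] by auto
    then show ?thesis
      using l1_dist_triangle[of x y q] by linarith
  qed
  then show ?thesis
    unfolding VR_def using assms by auto
qed

lemma open_l1_nbhd: "open (l1_nbhd X s)"
proof -
  have "l1_nbhd X s = (\<Union>x\<in>X. {y. l1_dist x y < s})"
    unfolding l1_nbhd_def by auto
  moreover have "open {y. l1_dist x y < s}" for x
    unfolding l1_dist_def by (intro open_Collect_less continuous_intros)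
  ultimately show ?thesis
    by auto
qed

definition barycenter :: "((real \<times> real) \<Rightarrow> real) \<Rightarrow> real \<times> real" where
  "barycenter \<beta> = (\<Sum>v\<in>supp_coords \<beta>. \<beta> v *\<^sub>R v)"

lemma barycenter_eq_sum:
  assumes "finite T" "supp_coords \<beta> \<subseteq> T"
  shows "barycenter \<beta> = (\<Sum>v\<in>T. \<beta> v *\<^sub>R v)"
  unfolding barycenter_def
  by (rule sum.mono_neutral_left[OF assms]) (auto simp: supp_coords_def)

lemma barycenter_in_convex_hull:
  assumes "\<beta> \<in> geom_real K"
  shows "barycenter \<beta> \<in> convex hull (supp_coords \<beta>)"
  using assms unfolding barycenter_def geom_real_def
  by (subst convex_hull_finite) (auto intro!: exI[of _ \<beta>])

lemma barycenter_l1_near_vertex: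
  assumes "\<beta> \<in> geom_real (VR X (2 * s))"
  shows "\<exists>x\<in>supp_coords \<beta>. l1_dist (barycenter \<beta>) x < s"
proof (rule l1_near_convex_hull)
  show "finite (supp_coords \<beta>)" "supp_coords \<beta> \<noteq> {}"
    using assms unfolding geom_real_def by auto
  show "\<forall>x\<in>supp_coords \<beta>. \<forall>x'\<in>supp_coords \<beta>. l1_dist x x' < 2 * s"
    using geom_real_supp_in[OF assms] unfolding VR_def by blast
qed (rule barycenter_in_convex_hull[OF assms])

lemma barycenter_in_l1_nbhd:
  assumes "\<beta> \<in> geom_real (VR X (2 * s))"
  shows "barycenter \<beta> \<in> l1_nbhd X s"
proof -
  have "supp_coords \<beta> \<subseteq> X"
    using geom_real_supp_in[OF assms] unfolding VR_def by simp
  then show ?thesis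
    using barycenter_l1_near_vertex[OF assms] unfolding l1_nbhd_def by (auto simp: l1_dist_sym)
qed

lemma continuous_on_barycenter:
  assumes "\<sigma> \<in> VR X r"
  shows "continuous_on (closed_simplex (VR X r) \<sigma>) barycenter"
proof -
  have "continuous_on (closed_simplex (VR X r) \<sigma>) (\<lambda>\<beta>. \<Sum>v\<in>\<sigma>. \<beta> v *\<^sub>R v)"
    by (intro continuous_intros continuous_on_product_coordinates[THEN continuous_on_subset]) auto
  moreover have "barycenter \<beta> = (\<Sum>v\<in>\<sigma>. \<beta> v *\<^sub>R v)" if "\<beta> \<in> closed_simplex (VR X r) \<sigma>" for \<beta>
    using that barycenter_eq_sum[OF VR_finite[OF assms]] unfolding closed_simplex_def by blast
  ultimately show ?thesis
    using continuous_on_cong by fastforce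
qed

lemma continuous_map_barycenter:
  "continuous_map (realization (VR X (2 * s))) (top_of_set (l1_nbhd X s)) barycenter"
proof (rule continuous_map_from_realization)
  fix \<sigma> assume \<sigma>: "\<sigma> \<in> VR X (2 * s)"
  have "barycenter ` closed_simplex (VR X (2 * s)) \<sigma> \<subseteq> l1_nbhd X s"
    using barycenter_in_l1_nbhd unfolding closed_simplex_def by blast
  then show "continuous_map (top_of_set (closed_simplex (VR X (2 * s)) \<sigma>)) (top_of_set (l1_nbhd X s)) barycenter"
    using continuous_on_barycenter[OF \<sigma>]
    by (simp add: continuous_map_in_subtopology image_subset_iff_funcset)
qed

text \<open>Reweighting keeps the vertices within \<open>s\<close> of the barycentre; the normaliser is positive
by \<open>barycenter_l1_near_vertex\<close>.\<close>

definition near_weight :: "real \<Rightarrow> ((real \<times> real) \<Rightarrow> real) \<Rightarrow> (real \<times> real) \<Rightarrow> real" where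
  "near_weight s \<beta> v = \<beta> v * max 0 (s - l1_dist v (barycenter \<beta>))"

definition reweight :: "real \<Rightarrow> ((real \<times> real) \<Rightarrow> real) \<Rightarrow> (real \<times> real) \<Rightarrow> real" where
  "reweight s \<beta> v = near_weight s \<beta> v / sum (near_weight s \<beta>) (supp_coords \<beta>)"

lemma near_weight_nonneg: "\<beta> \<in> geom_real K \<Longrightarrow> 0 \<le> near_weight s \<beta> v"
  unfolding near_weight_def by (simp add: geom_real_nonneg)

lemma sum_near_weight_eq:
  assumes "finite T" "supp_coords \<beta> \<subseteq> T"
  shows "sum (near_weight s \<beta>) (supp_coords \<beta>) = sum (near_weight s \<beta>) T"
  by (rule sum.mono_neutral_left[OF assms]) (auto simp: supp_coords_def near_weight_def)

lemma sum_near_weight_pos: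
  assumes "\<beta> \<in> geom_real (VR X (2 * s))"
  shows "0 < sum (near_weight s \<beta>) (supp_coords \<beta>)"
proof -
  obtain x where x: "x \<in> supp_coords \<beta>" "l1_dist (barycenter \<beta>) x < s"
    using barycenter_l1_near_vertex[OF assms] by blast
  then have "0 < near_weight s \<beta> x"
    using geom_real_nonneg[OF assms, of x]
    unfolding near_weight_def supp_coords_def by (simp add: l1_dist_sym)
  then show ?thesis
    using geom_real_finite[OF assms] x(1) near_weight_nonneg[OF assms]
    by (intro sum_pos2[of _ x]) auto
qed

lemma supp_reweight:
  "supp_coords (reweight s \<beta>) \<subseteq> {v \<in> supp_coords \<beta>. l1_dist v (barycenter \<beta>) < s}"
  unfolding supp_coords_def reweight_def near_weight_def by (auto simp: max_def split: if_splits)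

lemma reweight_in_geom_real:
  assumes "\<beta> \<in> geom_real (VR X (2 * s))"
  shows "reweight s \<beta> \<in> geom_real (VR X (2 * s))"
proof (rule geom_real_VR_memI)
  show "0 \<le> reweight s \<beta> v" for v
    unfolding reweight_def using sum_near_weight_pos[OF assms] near_weight_nonneg[OF assms] by simp
  show "sum (reweight s \<beta>) (supp_coords \<beta>) = 1"
    unfolding reweight_def using sum_near_weight_pos[OF assms]
    by (simp add: sum_divide_distrib[symmetric])
  show "supp_coords (reweight s \<beta>) \<subseteq> supp_coords \<beta>"
    using supp_reweight by blast
qed (use assms geom_real_finite geom_real_supp_in in auto)

lemma continuous_on_reweight:
  assumes \<sigma>: "\<sigma> \<in> VR X (2 * s)"
  shows "continuous_on (closed_simplex (VR X (2 * s)) \<sigma>) (reweight s)"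
proof (rule continuous_on_coordinatewise_then_product)
  fix v
  let ?D = "closed_simplex (VR X (2 * s)) \<sigma>"
  have coord: "continuous_on ?D (\<lambda>\<beta>. \<beta> u)" for u
    by (rule continuous_on_subset[OF continuous_on_product_coordinates]) simp
  have near_weight: "continuous_on ?D (\<lambda>\<beta>. near_weight s \<beta> u)" for u
    unfolding near_weight_def l1_dist_def
    by (intro continuous_intros coord continuous_on_barycenter[OF \<sigma>])
  have "\<forall>\<beta>\<in>?D. sum (near_weight s \<beta>) \<sigma> \<noteq> 0"
    using sum_near_weight_pos sum_near_weight_eq[OF VR_finite[OF \<sigma>]]
    unfolding closed_simplex_def by (metis (mono_tags, lifting) mem_Collect_eq less_irrefl)
  then have "continuous_on ?D (\<lambda>\<beta>. near_weight s \<beta> v / sum (near_weight s \<beta>) \<sigma>)"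
    by (intro continuous_on_divide near_weight continuous_on_sum)
  moreover have "reweight s \<beta> v = near_weight s \<beta> v / sum (near_weight s \<beta>) \<sigma>" if "\<beta> \<in> ?D" for \<beta>
    using that sum_near_weight_eq[OF VR_finite[OF \<sigma>]]
    unfolding reweight_def closed_simplex_def by auto
  ultimately show "continuous_on ?D (\<lambda>\<beta>. reweight s \<beta> v)"
    using continuous_on_cong by fastforce
qed

definition l1_nerve_map ::
    "(real \<times> real) set \<Rightarrow> real \<Rightarrow> (real \<times> real \<Rightarrow> (real \<times> real) \<Rightarrow> real) \<Rightarrow> bool" where
  "l1_nerve_map X s g \<longleftrightarrow>
     continuous_on (l1_nbhd X s) g \<and>
     (\<forall>y\<in>l1_nbhd X s. g y \<in> geom_real (VR X (2 * s)) \<and>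
        (\<forall>x\<in>supp_coords (g y). x \<in> X \<and> l1_dist x y < s)) \<and>
     (\<forall>y\<in>l1_nbhd X s. \<exists>V. open V \<and> y \<in> V \<and> finite (\<Union>y'\<in>V \<inter> l1_nbhd X s. supp_coords (g y')))"

lemma l1_nerve_map_exists:
  obtains g where "l1_nerve_map X s g"
proof -
  let ?N = "l1_nbhd X s"
  have cover: "?N \<subseteq> (\<Union>x\<in>X. {y. l1_dist x y < s})"
    unfolding l1_nbhd_def by blast
  have open_ball: "open {y. l1_dist x y < s}" for x
    unfolding l1_dist_def by (intro open_Collect_less continuous_intros)
  obtain \<psi> :: "real \<times> real \<Rightarrow> real \<times> real \<Rightarrow> real" where
    \<psi>_cont: "\<And>x. continuous_on ?N (\<psi> x)"
    and \<psi>_nonneg: "\<And>x y. y \<in> ?N \<Longrightarrow> 0 \<le> \<psi> x y"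
    and \<psi>_supp: "\<And>x y. y \<in> ?N \<Longrightarrow> \<psi> x y \<noteq> 0 \<Longrightarrow> x \<in> X \<and> y \<in> {y. l1_dist x y < s}"
    and \<psi>_locfin: "\<And>y. y \<in> ?N \<Longrightarrow> \<exists>V. open V \<and> y \<in> V \<and> finite {x. \<exists>y'\<in>V \<inter> ?N. \<psi> x y' \<noteq> 0}"
    and \<psi>_sum: "\<And>y. y \<in> ?N \<Longrightarrow> sum (\<lambda>x. \<psi> x y) {x. \<psi> x y \<noteq> 0} = 1"
    by (rule indexed_partition_of_unity[OF open_l1_nbhd cover open_ball]) blast
  define g where "g y = (\<lambda>x. \<psi> x y)" for y
  have supp_g: "supp_coords (g y) = {x. \<psi> x y \<noteq> 0}" for y
    unfolding supp_coords_def g_def by simp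
  have fin: "finite (supp_coords (g y))" if y: "y \<in> ?N" for y
  proof -
    obtain V where "open V" "y \<in> V" "finite {x. \<exists>y'\<in>V \<inter> ?N. \<psi> x y' \<noteq> 0}"
      using \<psi>_locfin[OF y] by blast
    moreover have "supp_coords (g y) \<subseteq> {x. \<exists>y'\<in>V \<inter> ?N. \<psi> x y' \<noteq> 0}"
      using \<open>y \<in> V\<close> y unfolding supp_g by blast
    ultimately show ?thesis
      using finite_subset by blast
  qed
  have near: "x \<in> X \<and> l1_dist x y < s" if "y \<in> ?N" "x \<in> supp_coords (g y)" for x y
    using \<psi>_supp that unfolding supp_g by auto
  have "g y \<in> geom_real (VR X (2 * s))" if y: "y \<in> ?N" for y
  proof (rule geom_real_VR_memI[OF _ fin[OF y] order_refl])
    show "0 \<le> g y x" for x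
      unfolding g_def using \<psi>_nonneg[OF y] .
    show "sum (g y) (supp_coords (g y)) = 1"
      using \<psi>_sum[OF y] unfolding supp_g unfolding g_def .
    then have "supp_coords (g y) \<noteq> {}"
      by auto
    then show "supp_coords (g y) \<in> VR X (2 * s)"
      using near[OF y] by (intro VR_if_l1_near[OF fin[OF y]]) auto
  qed
  moreover have "continuous_on ?N g"
    unfolding g_def using \<psi>_cont by (rule continuous_on_coordinatewise_then_product)
  moreover have "\<exists>V. open V \<and> y \<in> V \<and> finite (\<Union>y'\<in>V \<inter> ?N. supp_coords (g y'))" if "y \<in> ?N" for y
  proof -
    have "(\<Union>y'\<in>V \<inter> ?N. supp_coords (g y')) = {x. \<exists>y'\<in>V \<inter> ?N. \<psi> x y' \<noteq> 0}" for V
      unfolding supp_g by blast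
    then show ?thesis
      using \<psi>_locfin[OF that] by simp
  qed
  ultimately have "l1_nerve_map X s g"
    unfolding l1_nerve_map_def using near by blast
  then show thesis
    by (rule that)
qed

lemma continuous_map_l1_nerve_map:
  assumes "l1_nerve_map X s g"
  shows "continuous_map (top_of_set (l1_nbhd X s)) (realization (VR X (2 * s))) g"
proof (rule continuous_map_into_realization)
  show "continuous_map (top_of_set (l1_nbhd X s)) euclidean g"
    using assms unfolding l1_nerve_map_def by simp
  show "g y \<in> geom_real (VR X (2 * s))" if "y \<in> topspace (top_of_set (l1_nbhd X s))" for y
    using assms that unfolding l1_nerve_map_def by simp
  fix y assume "y \<in> topspace (top_of_set (l1_nbhd X s))"
  then obtain V where V: "open V" "y \<in> V" "finite (\<Union>y'\<in>V \<inter> l1_nbhd X s. supp_coords (g y'))"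
    using assms unfolding l1_nerve_map_def by auto
  show "\<exists>T F. openin (top_of_set (l1_nbhd X s)) T \<and> y \<in> T \<and> finite F \<and> (\<forall>y'\<in>T. supp_coords (g y') \<subseteq> F)"
    using V \<open>y \<in> topspace _\<close> by (intro exI[of _ "l1_nbhd X s \<inter> V"] exI conjI) auto
qed

lemma homotopic_barycenter_l1_nerve_map:
  assumes g: "l1_nerve_map X s g"
  shows "homotopic_with (\<lambda>_. True) (top_of_set (l1_nbhd X s)) (top_of_set (l1_nbhd X s)) (barycenter \<circ> g) id"
proof (rule homotopic_with_linear)
  let ?N = "l1_nbhd X s"
  have "continuous_map (top_of_set ?N) (top_of_set ?N) (barycenter \<circ> g)"
    using continuous_map_l1_nerve_map[OF g] continuous_map_barycenter by (rule continuous_map_compose)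
  then show "continuous_on ?N (barycenter \<circ> g)"
    by (simp add: continuous_map_in_subtopology)
  show "continuous_on ?N id"
    by (rule continuous_on_id')
  fix y assume y: "y \<in> ?N"
  let ?S = "supp_coords (g y)"
  have gy: "g y \<in> geom_real (VR X (2 * s))" and near: "\<forall>x\<in>?S. x \<in> X \<and> l1_dist x y < s"
    using g y unfolding l1_nerve_map_def by auto
  have "(barycenter \<circ> g) y \<in> convex hull (insert y ?S)"
    using barycenter_in_convex_hull[OF gy] hull_mono[of ?S "insert y ?S"] by auto
  moreover have "id y \<in> convex hull (insert y ?S)"
    by (simp add: hull_inc)
  ultimately have "closed_segment ((barycenter \<circ> g) y) (id y) \<subseteq> convex hull (insert y ?S)"
    by (rule closed_segment_subset) (rule convex_convex_hull)
  moreover have "?S \<noteq> {}"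
    using gy unfolding geom_real_def by auto
  then have "convex hull (insert y ?S) \<subseteq> ?N"
    using l1_near_convex_hull_insert[of ?S y s] near
    unfolding l1_nbhd_def by (fastforce simp: l1_dist_sym)
  ultimately show "closed_segment ((barycenter \<circ> g) y) (id y) \<subseteq> ?N"
    by blast
qed

lemma homotopic_id_reweight:
  "homotopic_with (\<lambda>_. True) (realization (VR X (2 * s))) (realization (VR X (2 * s))) id (reweight s)"
proof (rule homotopic_linear_in_realization[OF VR_downward_closed])
  fix \<beta> assume "\<beta> \<in> geom_real (VR X (2 * s))"
  moreover have "supp_coords (id \<beta>) \<union> supp_coords (reweight s \<beta>) = supp_coords \<beta>"
    using supp_reweight[of s \<beta>] by auto
  ultimately show "id \<beta> \<in> geom_real (VR X (2 * s)) \<and> reweight s \<beta> \<in> geom_real (VR X (2 * s)) \<and>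
      supp_coords (id \<beta>) \<union> supp_coords (reweight s \<beta>) \<in> VR X (2 * s)"
    using reweight_in_geom_real geom_real_supp_in by auto
next
  fix \<sigma> assume \<sigma>: "\<sigma> \<in> VR X (2 * s)"
  then show "continuous_on (closed_simplex (VR X (2 * s)) \<sigma>) id \<and>
      continuous_on (closed_simplex (VR X (2 * s)) \<sigma>) (reweight s)"
    by (simp add: continuous_on_id continuous_on_reweight)
  fix \<beta> assume "\<beta> \<in> closed_simplex (VR X (2 * s)) \<sigma>"
  moreover have "supp_coords (id \<beta>') \<union> supp_coords (reweight s \<beta>') \<subseteq> \<sigma>"
    if "\<beta>' \<in> closed_simplex (VR X (2 * s)) \<sigma>" for \<beta>'
    using that supp_reweight[of s \<beta>'] unfolding closed_simplex_def by auto
  ultimately show "\<exists>T F. openin (top_of_set (closed_simplex (VR X (2 * s)) \<sigma>)) T \<and> \<beta> \<in> T \<and> finite F \<and>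
      (\<forall>\<beta>'\<in>T. supp_coords (id \<beta>') \<union> supp_coords (reweight s \<beta>') \<subseteq> F)"
    using VR_finite[OF \<sigma>] by (intro exI[of _ "closed_simplex (VR X (2 * s)) \<sigma>"] exI[of _ \<sigma>]) auto
qed

lemma reweight_l1_nerve_map_common_simplex:
  assumes g: "l1_nerve_map X s g" and \<beta>: "\<beta> \<in> geom_real (VR X (2 * s))"
  shows "supp_coords (reweight s \<beta>) \<union> supp_coords (g (barycenter \<beta>)) \<in> VR X (2 * s)"
proof (rule VR_if_l1_near)
  let ?q = "barycenter \<beta>"
  have gq: "g ?q \<in> geom_real (VR X (2 * s))" and near: "\<forall>x\<in>supp_coords (g ?q). x \<in> X \<and> l1_dist x ?q < s"
    using g barycenter_in_l1_nbhd[OF \<beta>] unfolding l1_nerve_map_def by auto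
  show "finite (supp_coords (reweight s \<beta>) \<union> supp_coords (g ?q))"
    using geom_real_finite[OF reweight_in_geom_real[OF \<beta>]] geom_real_finite[OF gq] by simp
  show "supp_coords (reweight s \<beta>) \<union> supp_coords (g ?q) \<noteq> {}"
    using gq unfolding geom_real_def by auto
  have "supp_coords \<beta> \<subseteq> X"
    using geom_real_supp_in[OF \<beta>] unfolding VR_def by simp
  then show "supp_coords (reweight s \<beta>) \<union> supp_coords (g ?q) \<subseteq> X"
    "\<forall>x\<in>supp_coords (reweight s \<beta>) \<union> supp_coords (g ?q). l1_dist x ?q < s"
    using supp_reweight[of s \<beta>] near by auto
qed

lemma homotopic_reweight_l1_nerve_map:
  assumes g: "l1_nerve_map X s g"
  shows "homotopic_with (\<lambda>_. True) (realization (VR X (2 * s))) (realization (VR X (2 * s)))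
           (reweight s) (g \<circ> barycenter)"
proof (rule homotopic_linear_in_realization[OF VR_downward_closed])
  fix \<beta> assume \<beta>: "\<beta> \<in> geom_real (VR X (2 * s))"
  then have "g (barycenter \<beta>) \<in> geom_real (VR X (2 * s))"
    using g barycenter_in_l1_nbhd unfolding l1_nerve_map_def by blast
  then show "reweight s \<beta> \<in> geom_real (VR X (2 * s)) \<and> (g \<circ> barycenter) \<beta> \<in> geom_real (VR X (2 * s)) \<and>
      supp_coords (reweight s \<beta>) \<union> supp_coords ((g \<circ> barycenter) \<beta>) \<in> VR X (2 * s)"
    using reweight_in_geom_real[OF \<beta>] reweight_l1_nerve_map_common_simplex[OF g \<beta>] by simp
next
  let ?K = "VR X (2 * s)"
  let ?N = "l1_nbhd X s"
  fix \<sigma> assume \<sigma>: "\<sigma> \<in> ?K"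
  let ?D = "closed_simplex ?K \<sigma>"
  have bary: "continuous_on ?D barycenter" "barycenter ` ?D \<subseteq> ?N"
    using continuous_on_barycenter[OF \<sigma>] barycenter_in_l1_nbhd unfolding closed_simplex_def by auto
  moreover have "continuous_on ?N g"
    using g unfolding l1_nerve_map_def by simp
  ultimately show "continuous_on ?D (reweight s) \<and> continuous_on ?D (g \<circ> barycenter)"
    using continuous_on_reweight[OF \<sigma>] continuous_on_compose continuous_on_subset by blast
  fix \<beta> assume "\<beta> \<in> ?D"
  then obtain V where V: "open V" "barycenter \<beta> \<in> V" "finite (\<Union>y'\<in>V \<inter> ?N. supp_coords (g y'))"
    using g bary(2) unfolding l1_nerve_map_def by blast
  have "openin (top_of_set ?D) (?D \<inter> barycenter -` V)"
    using bary(1) V(1) by (rule continuous_openin_preimage_gen)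
  moreover have "supp_coords (reweight s \<beta>') \<union> supp_coords ((g \<circ> barycenter) \<beta>')
      \<subseteq> \<sigma> \<union> (\<Union>y'\<in>V \<inter> ?N. supp_coords (g y'))" if "\<beta>' \<in> ?D \<inter> barycenter -` V" for \<beta>'
    using that bary(2) supp_reweight[of s \<beta>'] unfolding closed_simplex_def by auto
  ultimately show "\<exists>T F. openin (top_of_set ?D) T \<and> \<beta> \<in> T \<and> finite F \<and>
      (\<forall>\<beta>'\<in>T. supp_coords (reweight s \<beta>') \<union> supp_coords ((g \<circ> barycenter) \<beta>') \<subseteq> F)"
    using \<open>\<beta> \<in> ?D\<close> V(2,3) VR_finite[OF \<sigma>]
    by (intro exI[of _ "?D \<inter> barycenter -` V"] exI[of _ "\<sigma> \<union> (\<Union>y'\<in>V \<inter> ?N. supp_coords (g y'))"]) auto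
qed

lemma VR_homotopy_equivalent_l1_nbhd:
  "realization (VR X (2 * s)) homotopy_equivalent_space top_of_set (l1_nbhd X s)"
proof -
  obtain g where g: "l1_nerve_map X s g"
    by (rule l1_nerve_map_exists)
  have "homotopic_with (\<lambda>_. True) (realization (VR X (2 * s))) (realization (VR X (2 * s))) (g \<circ> barycenter) id"
    using homotopic_with_trans[OF homotopic_id_reweight homotopic_reweight_l1_nerve_map[OF g]]
    by (simp add: homotopic_with_sym)
  then show ?thesis
    unfolding homotopy_equivalent_space_def
    using continuous_map_barycenter continuous_map_l1_nerve_map[OF g] homotopic_barycenter_l1_nerve_map[OF g]
    by blast
qed

theorem corollary2p3:
  shows "(\<forall>(X :: (real \<times> real) set) (r :: real). r > 0 \<longrightarrow>
            realization (VR X r) homotopy_equivalent_space top_of_set (l1_nbhd X (r / 2)))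
       \<and> (\<forall>(X :: (real \<times> real) set) (\<epsilon> :: real). \<epsilon> > 0 \<and> l1_dense X \<epsilon> \<longrightarrow>
            (\<forall>r. r > 2 * \<epsilon> \<longrightarrow> contractible_space (realization (VR X r))))"
proof (intro conjI allI impI)
  fix X :: "(real \<times> real) set" and r :: real
  show "realization (VR X r) homotopy_equivalent_space top_of_set (l1_nbhd X (r / 2))"
    using VR_homotopy_equivalent_l1_nbhd[of X "r / 2"] by simp
next
  fix X :: "(real \<times> real) set" and \<epsilon> r :: real
  assume dense: "\<epsilon> > 0 \<and> l1_dense X \<epsilon>" and r: "r > 2 * \<epsilon>"
  have "y \<in> l1_nbhd X (r / 2)" for y
  proof -
    obtain x where "x \<in> X" "l1_dist y x < \<epsilon>"
      using dense unfolding l1_dense_def by blast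
    then show ?thesis
      using r l1_dist_sym[of x y] unfolding l1_nbhd_def by force
  qed
  then have "l1_nbhd X (r / 2) = UNIV"
    by blast
  then have "contractible (l1_nbhd X (r / 2))"
    by (simp add: convex_imp_contractible)
  then have "contractible_space (top_of_set (l1_nbhd X (r / 2)))"
    by (simp only: contractible_space_top_of_set)
  moreover have "realization (VR X r) homotopy_equivalent_space top_of_set (l1_nbhd X (r / 2))"
    using VR_homotopy_equivalent_l1_nbhd[of X "r / 2"] by simp
  ultimately show "contractible_space (realization (VR X r))"
    using homotopy_equivalent_space_contractibility by blast
qed

end
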